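(* Let $\Gamma$ be a connected connected-homogeneous locally-finite bipartite graph with bipartition $X\cup Y$. If $\Gamma$ is not a tree and has at least one vertex of degree greater than $2$, then $\Gamma$ embeds the $4$-cycle $C_4$ as an induced subgraph.
   Context: A bipartite graph with given bipartition $X\cup Y$ is a connected-homogeneous bipartite graph if every isomorphism between finite connected induced subgraphs mapping vertices of $X$ to vertices of $X$ and vertices of $Y$ to vertices of $Y$ extends to an automorphism of the graph preserving $X$ and $Y$ setwise. Locally-finite: every vertex has finite degree. *)

theory Defs
  imports Main
begin

definition simple_graph :: "'a set \<Rightarrow> ('a \<Rightarrow> 'a \<Rightarrow> bool) \<Rightarrow> bool" where
  "simple_graph V E \<longleftrightarrow>
     (\<forall>u v. E u v \<longrightarrow> u \<in> V \<and> v \<in> V) \<and>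
     (\<forall>u v. E u v \<longrightarrow> E v u) \<and>
     (\<forall>v. \<not> E v v)"

definition bipartite_graph :: "'a set \<Rightarrow> ('a \<Rightarrow> 'a \<Rightarrow> bool) \<Rightarrow> 'a set \<Rightarrow> 'a set \<Rightarrow> bool" where
  "bipartite_graph V E X Y \<longleftrightarrow>
     simple_graph V E \<and> X \<union> Y = V \<and> X \<inter> Y = {} \<and>
     (\<forall>u v. E u v \<longrightarrow> (u \<in> X \<and> v \<in> Y) \<or> (u \<in> Y \<and> v \<in> X))"

definition nbhd :: "'a set \<Rightarrow> ('a \<Rightarrow> 'a \<Rightarrow> bool) \<Rightarrow> 'a \<Rightarrow> 'a set" where
  "nbhd V E v = {w \<in> V. E v w}"

definition degree :: "'a set \<Rightarrow> ('a \<Rightarrow> 'a \<Rightarrow> bool) \<Rightarrow> 'a \<Rightarrow> nat" where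
  "degree V E v = card (nbhd V E v)"

definition locally_finite :: "'a set \<Rightarrow> ('a \<Rightarrow> 'a \<Rightarrow> bool) \<Rightarrow> bool" where
  "locally_finite V E \<longleftrightarrow> (\<forall>v \<in> V. finite (nbhd V E v))"

definition connected_on :: "('a \<Rightarrow> 'a \<Rightarrow> bool) \<Rightarrow> 'a set \<Rightarrow> bool" where
  "connected_on E A \<longleftrightarrow>
     (\<forall>u \<in> A. \<forall>v \<in> A. (\<lambda>x y. x \<in> A \<and> y \<in> A \<and> E x y)\<^sup>*\<^sup>* u v)"

definition connected_graph :: "'a set \<Rightarrow> ('a \<Rightarrow> 'a \<Rightarrow> bool) \<Rightarrow> bool" where
  "connected_graph V E \<longleftrightarrow> connected_on E V"

definition induced_iso :: "('a \<Rightarrow> 'a \<Rightarrow> bool) \<Rightarrow> 'a set \<Rightarrow> 'a set \<Rightarrow> ('a \<Rightarrow> 'a) \<Rightarrow> bool" where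
  "induced_iso E A B f \<longleftrightarrow>
     bij_betw f A B \<and> (\<forall>u \<in> A. \<forall>v \<in> A. E (f u) (f v) \<longleftrightarrow> E u v)"

definition bip_automorphism ::
  "'a set \<Rightarrow> ('a \<Rightarrow> 'a \<Rightarrow> bool) \<Rightarrow> 'a set \<Rightarrow> 'a set \<Rightarrow> ('a \<Rightarrow> 'a) \<Rightarrow> bool" where
  "bip_automorphism V E X Y g \<longleftrightarrow>
     induced_iso E V V g \<and> g ` X = X \<and> g ` Y = Y"

definition conn_homogeneous_bipartite ::
  "'a set \<Rightarrow> ('a \<Rightarrow> 'a \<Rightarrow> bool) \<Rightarrow> 'a set \<Rightarrow> 'a set \<Rightarrow> bool" where
  "conn_homogeneous_bipartite V E X Y \<longleftrightarrow>
     bipartite_graph V E X Y \<and>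
     (\<forall>A B f. A \<subseteq> V \<and> B \<subseteq> V \<and> finite A \<and> finite B \<and>
        connected_on E A \<and> connected_on E B \<and> induced_iso E A B f \<and>
        f ` (A \<inter> X) \<subseteq> X \<and> f ` (A \<inter> Y) \<subseteq> Y \<longrightarrow>
        (\<exists>g. bip_automorphism V E X Y g \<and> (\<forall>a \<in> A. g a = f a)))"

definition is_cycle :: "'a set \<Rightarrow> ('a \<Rightarrow> 'a \<Rightarrow> bool) \<Rightarrow> 'a list \<Rightarrow> bool" where
  "is_cycle V E cs \<longleftrightarrow>
     length cs \<ge> 3 \<and> distinct cs \<and> set cs \<subseteq> V \<and>
     (\<forall>i. Suc i < length cs \<longrightarrow> E (cs ! i) (cs ! Suc i)) \<and>
     E (last cs) (hd cs)"

definition is_tree :: "'a set \<Rightarrow> ('a \<Rightarrow> 'a \<Rightarrow> bool) \<Rightarrow> bool" where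
  "is_tree V E \<longleftrightarrow> connected_graph V E \<and> (\<nexists>cs. is_cycle V E cs)"

definition embeds_induced_C4 :: "'a set \<Rightarrow> ('a \<Rightarrow> 'a \<Rightarrow> bool) \<Rightarrow> bool" where
  "embeds_induced_C4 V E \<longleftrightarrow>
     (\<exists>a b c d. a \<in> V \<and> b \<in> V \<and> c \<in> V \<and> d \<in> V \<and> distinct [a, b, c, d] \<and>
        E a b \<and> E b c \<and> E c d \<and> E d a \<and> \<not> E a c \<and> \<not> E b d)"

end

theory Submission
  imports Defs
begin

text \<open>
  Suppose there is no induced 4-cycle. In a bipartite graph every 4-cycle is induced, so two
  distinct vertices have at most one common neighbour. Degrees are constant on each side, so
  some vertex c0 of a shortest cycle c0 ... c(n-1) has a neighbour w off the cycle, and n \<ge> 6.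
  The paths c1 ... c(n-1) and w c0 ... c(n-3) are induced, equally long and start on the same
  side, so connected-homogeneity maps one onto the other; the image of c0 closes a hexagon
  through w, hence n = 6. Then c0 and c3 are joined by three internally disjoint paths of
  length 3, the third being c0 w p c3. Since w lies on the side of c3, it has a third
  neighbour q. Replacing p by q extends to an automorphism fixing c2 and c4, hence their
  common neighbour c3; so p and q would be two common neighbours of w and c3.
\<close>

lemma connected_on_walk:
  assumes "symp E" "successively E xs"
  shows "connected_on E (set xs)"
proof -
  let ?R = "\<lambda>u v. u \<in> set xs \<and> v \<in> set xs \<and> E u v"
  have reach: "?R\<^sup>*\<^sup>* (hd zs) v" if "successively E zs" "set zs \<subseteq> set xs" "v \<in> set zs" for zs v
    using that
  proof (induction zs)
    case (Cons z zs)
    show ?case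
    proof (cases "v = z")
      case False
      then have "zs \<noteq> []" and IH: "?R\<^sup>*\<^sup>* (hd zs) v" using Cons by (auto simp: successively_Cons)
      have "?R z (hd zs)" using Cons.prems \<open>zs \<noteq> []\<close> by (auto simp: successively_Cons)
      from this IH have "?R\<^sup>*\<^sup>* z v" by (rule converse_rtranclp_into_rtranclp)
      then show ?thesis by simp
    qed simp
  qed simp
  have "symp ?R" using assms(1) by (auto intro!: sympI dest: sympD)
  then show ?thesis
    using reach[OF assms(2) order_refl] sympD[OF symp_rtranclp] unfolding connected_on_def
    by (meson rtranclp_trans)
qed

lemma is_cycle_iff:
  "is_cycle V E cs \<longleftrightarrow> 3 \<le> length cs \<and> distinct cs \<and> set cs \<subseteq> V \<and>
     successively E cs \<and> E (last cs) (hd cs)"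
  by (auto simp: is_cycle_def successively_conv_nth)

lemma is_cycle_rotate1:
  assumes "is_cycle V E cs"
  shows "is_cycle V E (rotate1 cs)"
proof -
  obtain x xs where "cs = x # xs" "xs \<noteq> []"
    using assms unfolding is_cycle_def by (cases cs; cases "tl cs") auto
  then show ?thesis
    using assms by (auto simp: is_cycle_iff successively_Cons successively_append_iff)
qed

lemma is_cycle_closed_path:
  assumes "2 \<le> k" "inj_on d {..k}" "d ` {..k} \<subseteq> V" "\<And>i. i < k \<Longrightarrow> E (d i) (d (Suc i))"
    "E (d k) (d 0)"
  shows "is_cycle V E (map d [0..<Suc k])"
proof -
  have "distinct (map d [0..<Suc k])"
    using assms(2) by (simp add: distinct_map atLeast0LessThan lessThan_Suc_atMost del: upt_Suc)
  moreover have "E (map d [0..<Suc k] ! i) (map d [0..<Suc k] ! Suc i)" if "Suc i < Suc k" for i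
    using assms(4) that by (simp add: nth_map_upt del: upt_Suc)
  ultimately show ?thesis
    using assms by (auto simp: is_cycle_def hd_map last_map)
qed

definition induced_path :: "'a set \<Rightarrow> ('a \<Rightarrow> 'a \<Rightarrow> bool) \<Rightarrow> nat \<Rightarrow> (nat \<Rightarrow> 'a) \<Rightarrow> bool" where
  "induced_path V E k p \<longleftrightarrow> p ` {..k} \<subseteq> V \<and> inj_on p {..k} \<and>
     (\<forall>i\<le>k. \<forall>j\<le>k. E (p i) (p j) \<longleftrightarrow> j = Suc i \<or> i = Suc j)"

lemma connected_on_induced_path:
  assumes "symp E" "induced_path V E k p"
  shows "connected_on E (p ` {..k})"
proof -
  have "successively E (map p [0..<Suc k])"
    using assms(2) by (auto simp: successively_conv_nth induced_path_def nth_map_upt simp del: upt_Suc)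
  then have "connected_on E (set (map p [0..<Suc k]))" by (rule connected_on_walk[OF assms(1)])
  moreover have "set (map p [0..<Suc k]) = p ` {..k}" by (auto simp del: upt_Suc)
  ultimately show ?thesis by simp
qed

lemma degree_gt_2_imp_third_neighbour:
  assumes "degree V E v > 2"
  obtains w where "E v w" "w \<noteq> a" "w \<noteq> b"
proof -
  have "\<not> nbhd V E v \<subseteq> {a, b}"
  proof
    assume "nbhd V E v \<subseteq> {a, b}"
    then have "card (nbhd V E v) \<le> card {a, b}" by (intro card_mono) auto
    also have "\<dots> \<le> 2" by (simp add: card_insert_le_m1)
    finally show False using assms by (simp add: degree_def)
  qed
  then show ?thesis using that by (auto simp: nbhd_def)
qed

locale conn_hom_bipartite =
  fixes V :: "'a set" and E :: "'a \<Rightarrow> 'a \<Rightarrow> bool" and X Y :: "'a set"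
  assumes conn_hom: "conn_homogeneous_bipartite V E X Y"
begin

lemma bipartite: "bipartite_graph V E X Y"
  using conn_hom by (simp add: conn_homogeneous_bipartite_def)

lemma adj_sym: "E a b \<Longrightarrow> E b a"
  using bipartite by (auto simp: bipartite_graph_def simple_graph_def)

lemma symp_adj: "symp E"
  using adj_sym by (auto intro: sympI)

lemma adj_irrefl: "\<not> E a a"
  using bipartite by (auto simp: bipartite_graph_def simple_graph_def)

lemma adj_in_V: "E a b \<Longrightarrow> a \<in> V \<and> b \<in> V"
  using bipartite by (auto simp: bipartite_graph_def simple_graph_def)

lemma adj_side: "E a b \<Longrightarrow> (a \<in> X) \<longleftrightarrow> (b \<notin> X)"
  using bipartite by (auto simp: bipartite_graph_def)

lemma in_Y_iff: "a \<in> V \<Longrightarrow> (a \<in> Y) \<longleftrightarrow> (a \<notin> X)"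
  using bipartite by (auto simp: bipartite_graph_def)

lemma not_adj_same_side: "(a \<in> X) \<longleftrightarrow> (b \<in> X) \<Longrightarrow> \<not> E a b"
  using adj_side by blast

lemma common_neighbour_same_side: "E a b \<Longrightarrow> E a c \<Longrightarrow> (b \<in> X) \<longleftrightarrow> (c \<in> X)"
  using adj_side[of a b] adj_side[of a c] by blast

lemma automorphism_adj:
  assumes "bip_automorphism V E X Y g" "E x y"
  shows "E (g x) (g y)"
  using assms adj_in_V[OF assms(2)] by (auto simp: bip_automorphism_def induced_iso_def)

lemma automorphism_adj_iff:
  assumes "bip_automorphism V E X Y g" "x \<in> V" "y \<in> V"
  shows "E (g x) (g y) \<longleftrightarrow> E x y"
  using assms by (auto simp: bip_automorphism_def induced_iso_def)

lemma automorphism_bij: "bip_automorphism V E X Y g \<Longrightarrow> bij_betw g V V"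
  by (simp add: bip_automorphism_def induced_iso_def)

lemma extend_to_automorphism:
  assumes "A \<subseteq> V" "finite A" "connected_on E A" "connected_on E (f ` A)" "inj_on f A"
    "f ` A \<subseteq> V" "\<And>x y. x \<in> A \<Longrightarrow> y \<in> A \<Longrightarrow> E (f x) (f y) \<longleftrightarrow> E x y"
    "\<And>x. x \<in> A \<Longrightarrow> (f x \<in> X) \<longleftrightarrow> (x \<in> X)"
  obtains g where "bip_automorphism V E X Y g" "\<And>a. a \<in> A \<Longrightarrow> g a = f a"
proof -
  have "induced_iso E A (f ` A) f"
    using assms(5,7) unfolding induced_iso_def bij_betw_def by simp
  moreover have "f ` (A \<inter> X) \<subseteq> X" "f ` (A \<inter> Y) \<subseteq> Y"
    using assms(1,6,8) in_Y_iff by auto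
  ultimately show ?thesis
    using conn_hom assms(1-4,6) that unfolding conn_homogeneous_bipartite_def
    by (metis finite_imageI)
qed

lemma degree_eq_if_same_side:
  assumes "x \<in> V" "y \<in> V" "(x \<in> X) \<longleftrightarrow> (y \<in> X)"
  shows "degree V E x = degree V E y"
proof -
  obtain g where g: "bip_automorphism V E X Y g" "g x = y"
    by (rule extend_to_automorphism[of "{x}" "\<lambda>_. y"])
      (use assms adj_irrefl in \<open>auto simp: connected_on_def\<close>)
  have bij: "bij_betw g V V" by (rule automorphism_bij[OF g(1)])
  have "nbhd V E y = g ` nbhd V E x"
  proof
    show "g ` nbhd V E x \<subseteq> nbhd V E y"
      using g automorphism_adj bij_betwE[OF bij] by (auto simp: nbhd_def)
    show "nbhd V E y \<subseteq> g ` nbhd V E x"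
    proof
      fix w assume "w \<in> nbhd V E y"
      then have w: "w \<in> V" "E y w" by (auto simp: nbhd_def)
      then obtain z where "z \<in> V" "w = g z" using bij by (auto simp: bij_betw_def)
      then show "w \<in> g ` nbhd V E x"
        using automorphism_adj_iff[OF g(1) assms(1)] w g(2) by (auto simp: nbhd_def)
    qed
  qed
  moreover have "inj_on g (nbhd V E x)"
    using bij by (rule inj_on_subset[OF bij_betw_imp_inj_on]) (auto simp: nbhd_def)
  ultimately show ?thesis by (simp add: degree_def card_image)
qed

lemma extend_vertex_replacement:
  assumes "A \<subseteq> V" "finite A" "a \<in> A" "b \<in> V" "b \<notin> A"
    "connected_on E A" "connected_on E (insert b (A - {a}))"
    "(b \<in> X) \<longleftrightarrow> (a \<in> X)" "\<And>x. x \<in> A - {a} \<Longrightarrow> E x b \<longleftrightarrow> E x a"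
  obtains g where "bip_automorphism V E X Y g" "g a = b" "\<And>x. x \<in> A - {a} \<Longrightarrow> g x = x"
proof -
  let ?f = "\<lambda>x. if x = a then b else x"
  have image: "?f ` A = insert b (A - {a})" using assms(3) by auto
  have adj: "E (?f x) (?f y) \<longleftrightarrow> E x y" if "x \<in> A" "y \<in> A" for x y
  proof (cases "x = a"; cases "y = a")
    assume "x = a" "y \<noteq> a"
    then have "E y b \<longleftrightarrow> E y a" using assms(9) that(2) by blast
    then show ?thesis using \<open>x = a\<close> \<open>y \<noteq> a\<close> adj_sym by auto
  next
    assume "x \<noteq> a" "y = a"
    then show ?thesis using assms(9) that(1) by simp
  qed (simp_all add: adj_irrefl)
  obtain g where "bip_automorphism V E X Y g" "\<And>x. x \<in> A \<Longrightarrow> g x = ?f x"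
  proof (rule extend_to_automorphism[of A ?f])
    show "inj_on ?f A" using assms(5) by (auto simp: inj_on_def)
    show "?f x \<in> X \<longleftrightarrow> x \<in> X" for x using assms(8) by simp
  qed (use assms(1,2,4,6,7) image adj in auto)
  then show ?thesis using that assms(3) by auto
qed

lemma induced_path_side:
  assumes "induced_path V E k p" "i \<le> k"
  shows "(p i \<in> X) \<longleftrightarrow> (p 0 \<in> X) = even i"
  using assms(2)
proof (induction i)
  case (Suc i)
  then have "E (p i) (p (Suc i))" using assms(1) by (simp add: induced_path_def)
  then have "(p (Suc i) \<in> X) \<longleftrightarrow> (p i \<notin> X)" using adj_side by blast
  then show ?case using Suc by simp
qed simp

lemma induced_paths_conjugate:
  assumes p: "induced_path V E k p" and q: "induced_path V E k q"
    and side: "(p 0 \<in> X) \<longleftrightarrow> (q 0 \<in> X)"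
  obtains g where "bip_automorphism V E X Y g" "\<And>i. i \<le> k \<Longrightarrow> g (p i) = q i"
proof -
  define f where "f = q \<circ> the_inv_into {..k} p"
  have inj: "inj_on p {..k}" "inj_on q {..k}" using p q by (auto simp: induced_path_def)
  have f_p: "f (p i) = q i" if "i \<le> k" for i
    using the_inv_into_f_f[OF inj(1)] that by (simp add: f_def)
  have image: "f ` p ` {..k} = q ` {..k}"
    unfolding image_image by (rule image_cong) (simp_all add: f_p)
  obtain g where "bip_automorphism V E X Y g" "\<And>x. x \<in> p ` {..k} \<Longrightarrow> g x = f x"
  proof (rule extend_to_automorphism[of "p ` {..k}" f])
    show "p ` {..k} \<subseteq> V" "f ` p ` {..k} \<subseteq> V" using p q image by (simp_all add: induced_path_def)
    show "finite (p ` {..k})" by simp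
    show "connected_on E (p ` {..k})" "connected_on E (f ` p ` {..k})"
      using connected_on_induced_path[OF symp_adj] p q image by simp_all
    show "inj_on f (p ` {..k})"
    proof (rule inj_onI)
      fix x y assume xy: "x \<in> p ` {..k}" "y \<in> p ` {..k}" and "f x = f y"
      obtain i j where ij: "i \<le> k" "j \<le> k" "x = p i" "y = p j" using xy by auto
      then have "q i = q j" using \<open>f x = f y\<close> by (simp add: f_p)
      then have "i = j" by (rule inj_onD[OF inj(2)]) (use ij in simp_all)
      then show "x = y" using ij by simp
    qed
    show "E (f x) (f y) \<longleftrightarrow> E x y" if xy: "x \<in> p ` {..k}" "y \<in> p ` {..k}" for x y
    proof -
      obtain i j where "i \<le> k" "j \<le> k" "x = p i" "y = p j" using xy by auto
      then show ?thesis using p q by (simp add: f_p induced_path_def)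
    qed
    show "(f x \<in> X) \<longleftrightarrow> (x \<in> X)" if x: "x \<in> p ` {..k}" for x
    proof -
      obtain i where "i \<le> k" "x = p i" using x by auto
      then show ?thesis
        using induced_path_side[OF p \<open>i \<le> k\<close>] induced_path_side[OF q \<open>i \<le> k\<close>] side
        by (simp add: f_p)
    qed
  qed blast
  then show ?thesis using that f_p by auto
qed

lemma cycle_length_even:
  assumes "is_cycle V E cs"
  shows "even (length cs)"
proof -
  have side: "(cs ! i \<in> X) \<longleftrightarrow> (cs ! 0 \<in> X) = even i" if "i < length cs" for i
    using that
  proof (induction i)
    case (Suc i)
    then have "E (cs ! i) (cs ! Suc i)" using assms by (simp add: is_cycle_def)
    then have "(cs ! Suc i \<in> X) \<longleftrightarrow> (cs ! i \<notin> X)" using adj_side by blast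
    then show ?case using Suc by simp
  qed simp
  have "cs \<noteq> []" using assms by (auto simp: is_cycle_def)
  then have "E (cs ! (length cs - 1)) (cs ! 0)"
    using assms by (simp add: is_cycle_def last_conv_nth hd_conv_nth)
  then have "odd (length cs - 1)"
    using side[of "length cs - 1"] \<open>cs \<noteq> []\<close> adj_side by force
  then show ?thesis using \<open>cs \<noteq> []\<close> by simp
qed

end

locale C4_free_conn_hom_bipartite = conn_hom_bipartite +
  assumes locally_finite: "locally_finite V E"
    and no_induced_C4: "\<not> embeds_induced_C4 V E"
begin

lemma common_neighbours_unique:
  assumes "E a x" "E x b" "E a y" "E y b" "a \<noteq> b"
  shows "x = y"
proof (rule ccontr)
  assume "x \<noteq> y"
  have "\<not> E a b" "\<not> E x y"
    using common_neighbour_same_side[of x a b] common_neighbour_same_side[of a x y]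
      not_adj_same_side adj_sym assms by blast+
  moreover have "distinct [a, x, b, y]"
    using \<open>x \<noteq> y\<close> assms adj_irrefl by auto
  moreover have "a \<in> V" "x \<in> V" "b \<in> V" "y \<in> V" using assms adj_in_V by auto
  ultimately have "embeds_induced_C4 V E"
    unfolding embeds_induced_C4_def using assms adj_sym by blast
  then show False using no_induced_C4 by simp
qed

lemma degree_gt_2_if_three_neighbours:
  assumes "E v a" "E v b" "E v c" "distinct [a, b, c]"
  shows "degree V E v > 2"
proof -
  have "finite (nbhd V E v)" using locally_finite adj_in_V assms(1) by (simp add: locally_finite_def)
  moreover have "{a, b, c} \<subseteq> nbhd V E v" using assms adj_in_V by (auto simp: nbhd_def)
  ultimately have "card {a, b, c} \<le> card (nbhd V E v)" by (rule card_mono)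
  then show ?thesis using assms(4) by (simp add: degree_def)
qed

lemma automorphism_fixes_common_neighbour:
  assumes "bip_automorphism V E X Y g" "g y1 = y1" "g y2 = y2" "E y1 b" "E b y2" "y1 \<noteq> y2"
  shows "g b = b"
proof -
  have "E y1 (g b)" "E (g b) y2"
    using automorphism_adj[OF assms(1) assms(4)] automorphism_adj[OF assms(1) assms(5)] assms(2,3)
    by simp_all
  then show ?thesis using common_neighbours_unique assms(4-6) by blast
qed

lemma theta_vertex_replacement:
  assumes hex: "distinct [a, x1, y1, b, y2, x2]"
    and E: "E a x1" "E x1 y1" "E y1 b" "E b y2" "E y2 x2" "E x2 a"
    and w: "E a w" "w \<noteq> x1" "w \<noteq> x2" and p: "E w p" "E p b"
    and q: "E w q" "q \<noteq> a" "q \<noteq> p"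
  obtains g where "bip_automorphism V E X Y g" "g p = q" "g y1 = y1" "g y2 = y2"
proof -
  have side_a: "(z \<in> X) \<longleftrightarrow> (a \<in> X)" if "z \<in> {y1, y2, p, q}" for z
    using that E w p q common_neighbour_same_side adj_sym by blast
  have side_w: "(z \<in> X) \<longleftrightarrow> (a \<notin> X)" if "z \<in> {x1, x2, w}" for z
    using that E w adj_side by blast
  have "\<not> E a b"
    using common_neighbours_unique[of x1 y1 b a] E hex adj_sym by auto
  then have pa: "p \<noteq> a" using p by auto
  have not_adj_y: "\<not> E w y1" "\<not> E w y2"
    using common_neighbours_unique[of a x1 y1 w] common_neighbours_unique[of a x2 y2 w] E w hex
      adj_sym by auto
  have not_adj_x: "\<not> E x1 z" "\<not> E x2 z" if "E w z" "z \<noteq> a" for z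
    using common_neighbours_unique[of w a x1 z] common_neighbours_unique[of w a x2 z] E w that
      adj_sym by auto
  let ?A = "{y1, x1, a, x2, y2, w, p}"
  have A_p: "?A - {p} = {y1, x1, a, x2, y2, w}"
    using hex pa side_a side_w not_adj_y p(1) by auto
  show ?thesis
  proof (rule extend_vertex_replacement[of ?A p q])
    show "?A \<subseteq> V" "q \<in> V" using E w p q adj_in_V by auto
    show "q \<notin> ?A" using q hex side_a side_w not_adj_y by auto
    show "connected_on E ?A"
      using connected_on_walk[OF symp_adj, of "[y1, x1, a, x2, y2, x2, a, w, p]"] E w p adj_sym
      by (simp add: insert_commute)
    show "connected_on E (insert q (?A - {p}))"
      using connected_on_walk[OF symp_adj, of "[y1, x1, a, x2, y2, x2, a, w, q]"] E w q adj_sym A_p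
      by (simp add: insert_commute)
    show "(q \<in> X) \<longleftrightarrow> (p \<in> X)" using side_a by simp
    show "E z q \<longleftrightarrow> E z p" if "z \<in> ?A - {p}" for z
      using that A_p p q not_adj_x[of p] not_adj_x[of q] pa side_a not_adj_same_side adj_sym
      by auto
  qed (use that A_p in auto)
qed

lemma theta_middle_vertex_neighbours:
  assumes hex: "distinct [a, x1, y1, b, y2, x2]"
    and E: "E a x1" "E x1 y1" "E y1 b" "E b y2" "E y2 x2" "E x2 a"
    and w: "E a w" "w \<noteq> x1" "w \<noteq> x2" and p: "E w p" "E p b"
    and q: "E w q"
  shows "q = a \<or> q = p"
proof (rule ccontr)
  assume q_new: "\<not> ?thesis"
  then obtain g where g: "bip_automorphism V E X Y g" "g p = q" "g y1 = y1" "g y2 = y2"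
    using theta_vertex_replacement[OF hex E w p q] by blast
  then have "g b = b" using automorphism_fixes_common_neighbour[OF g(1,3,4) E(3,4)] hex by simp
  then have "E q b" using automorphism_adj[OF g(1) p(2)] g(2) by simp
  moreover have "w \<noteq> b"
    using common_neighbours_unique[of x1 y1 b a] E w hex adj_sym by auto
  ultimately show False
    using common_neighbours_unique[of w p b q] p q q_new by auto
qed

end

locale shortest_cycle = C4_free_conn_hom_bipartite +
  fixes cs :: "'a list"
  assumes cycle: "is_cycle V E cs"
    and shortest: "is_cycle V E ds \<Longrightarrow> length cs \<le> length ds"
begin

abbreviation girth :: nat where "girth \<equiv> length cs"

lemma girth_ge_3: "3 \<le> girth"
  using cycle by (simp add: is_cycle_def)

lemma cycle_nonempty [simp]: "cs \<noteq> []"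
  using girth_ge_3 by auto

lemma cycle_nth_in_V: "i < girth \<Longrightarrow> cs ! i \<in> V"
  using cycle by (auto simp: is_cycle_def)

lemma cycle_nth_eq_iff: "i < girth \<Longrightarrow> j < girth \<Longrightarrow> cs ! i = cs ! j \<longleftrightarrow> i = j"
  using cycle by (simp add: is_cycle_def nth_eq_iff_index_eq)

lemma cycle_adj: "Suc i < girth \<Longrightarrow> E (cs ! i) (cs ! Suc i)"
  using cycle by (simp add: is_cycle_def)

lemma cycle_adj_wrap: "E (cs ! (girth - 1)) (cs ! 0)"
  using cycle cycle_nonempty by (simp add: is_cycle_def last_conv_nth hd_conv_nth)

lemma girth_le_closed_path:
  assumes "2 \<le> k" "inj_on d {..k}" "d ` {..k} \<subseteq> V" "\<And>i. i < k \<Longrightarrow> E (d i) (d (Suc i))"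
    "E (d k) (d 0)"
  shows "girth \<le> Suc k"
  using shortest[OF is_cycle_closed_path[OF assms]] by simp

lemma cycle_chord_wraps:
  assumes "i < j" "j < girth" "E (cs ! i) (cs ! j)"
  shows "j = Suc i \<or> (i = 0 \<and> j = girth - 1)"
proof (rule ccontr)
  assume chord: "\<not> ?thesis"
  have "girth \<le> Suc (j - i)"
  proof (rule girth_le_closed_path[of "j - i" "\<lambda>t. cs ! (i + t)"])
    show "inj_on (\<lambda>t. cs ! (i + t)) {..j - i}"
      using assms(1,2) by (auto simp: inj_on_def cycle_nth_eq_iff)
    show "E (cs ! (i + (j - i))) (cs ! (i + 0))"
      using assms adj_sym by simp
  qed (use assms chord cycle_nth_in_V cycle_adj in auto)
  then show False using assms chord by auto
qed

lemma cycle_adj_iff: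
  assumes "i < girth" "j < girth"
  shows "E (cs ! i) (cs ! j) \<longleftrightarrow>
    j = Suc i \<or> i = Suc j \<or> (i = 0 \<and> j = girth - 1) \<or> (j = 0 \<and> i = girth - 1)"
proof
  assume ij: "E (cs ! i) (cs ! j)"
  then have "i \<noteq> j" using adj_irrefl by auto
  then consider "i < j" | "j < i" by linarith
  then show "j = Suc i \<or> i = Suc j \<or> (i = 0 \<and> j = girth - 1) \<or> (j = 0 \<and> i = girth - 1)"
    by cases (use cycle_chord_wraps assms ij adj_sym in blast)+
next
  assume "j = Suc i \<or> i = Suc j \<or> (i = 0 \<and> j = girth - 1) \<or> (j = 0 \<and> i = girth - 1)"
  then show "E (cs ! i) (cs ! j)"
    using assms cycle_adj cycle_adj_wrap adj_sym by auto
qed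

lemma girth_ge_6: "6 \<le> girth"
proof -
  have "girth \<noteq> 4"
  proof
    assume "girth = 4"
    then have "E (cs ! 0) (cs ! 1)" "E (cs ! 1) (cs ! 2)" "E (cs ! 0) (cs ! 3)" "E (cs ! 3) (cs ! 2)"
      using cycle_adj_iff by auto
    moreover have "cs ! 0 \<noteq> cs ! 2" "cs ! 1 \<noteq> cs ! 3"
      using cycle_nth_eq_iff \<open>girth = 4\<close> by auto
    ultimately show False using common_neighbours_unique by blast
  qed
  then show ?thesis using girth_ge_3 cycle_length_even[OF cycle] by presburger
qed

lemma induced_path_cycle_without_first:
  "induced_path V E (girth - 2) (\<lambda>i. cs ! Suc i)"
  unfolding induced_path_def
proof (intro conjI ballI allI impI)
  show "(\<lambda>i. cs ! Suc i) ` {..girth - 2} \<subseteq> V" using cycle_nth_in_V girth_ge_3 by auto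
  show "inj_on (\<lambda>i. cs ! Suc i) {..girth - 2}"
    using girth_ge_3 by (auto simp: inj_on_def cycle_nth_eq_iff)
  fix i j assume "i \<le> girth - 2" "j \<le> girth - 2"
  then show "E (cs ! Suc i) (cs ! Suc j) \<longleftrightarrow> j = Suc i \<or> i = Suc j"
    using cycle_adj_iff[of "Suc i" "Suc j"] girth_ge_3 by auto
qed

context
  fixes w
  assumes w: "E (cs ! 0) w" "w \<noteq> cs ! 1" "w \<noteq> cs ! (girth - 1)"
begin

lemma off_cycle_neighbour_not_on_cycle: "w \<notin> set cs"
proof
  assume "w \<in> set cs"
  then obtain j where j: "j < girth" "w = cs ! j" by (auto simp: in_set_conv_nth)
  then have "j \<noteq> 0" "j \<noteq> 1" "j \<noteq> girth - 1" using w adj_irrefl by (metis, auto)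
  then show False using cycle_adj_iff[of 0 j] w(1) j by auto
qed

lemma off_cycle_neighbour_not_adj_short_arc:
  assumes "1 \<le> i" "i \<le> girth - 3"
  shows "\<not> E w (cs ! i)"
proof
  assume wi: "E w (cs ! i)"
  let ?d = "\<lambda>t. if t \<le> i then cs ! t else w"
  have "girth \<le> Suc (Suc i)"
  proof (rule girth_le_closed_path[of "Suc i" ?d])
    show "inj_on ?d {..Suc i}"
      using assms off_cycle_neighbour_not_on_cycle nth_mem[of _ cs]
      by (auto simp: inj_on_def cycle_nth_eq_iff split: if_splits)
    show "?d ` {..Suc i} \<subseteq> V" using assms cycle_nth_in_V adj_in_V[OF wi] by auto
    show "E (?d t) (?d (Suc t))" if "t < Suc i" for t
      using that assms cycle_adj adj_sym[OF wi] by (cases "t = i") auto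
  qed (use assms adj_sym[OF w(1)] in auto)
  then show False using assms girth_ge_3 by auto
qed

lemma off_cycle_neighbour_not_adj:
  assumes "1 \<le> i" "i < girth"
  shows "\<not> E w (cs ! i)"
proof -
  consider "i \<le> girth - 3" | "i = girth - 2" | "i = girth - 1" using assms by linarith
  then show ?thesis
  proof cases
    case 1
    then show ?thesis using off_cycle_neighbour_not_adj_short_arc assms by blast
  next
    case 2
    show ?thesis
    proof
      assume "E w (cs ! i)"
      moreover have "E (cs ! (girth - 1)) (cs ! i)"
        using cycle_adj_iff[of "girth - 1" i] 2 girth_ge_6 by auto
      moreover have "cs ! 0 \<noteq> cs ! i" using cycle_nth_eq_iff 2 girth_ge_6 by auto
      ultimately show False
        using common_neighbours_unique[of "cs ! 0" "cs ! (girth - 1)" "cs ! i" w]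
          adj_sym[OF cycle_adj_wrap] w by auto
    qed
  next
    case 3
    then show ?thesis
      using common_neighbour_same_side[OF w(1) adj_sym[OF cycle_adj_wrap]] not_adj_same_side
      by blast
  qed
qed

lemma induced_path_via_off_cycle_neighbour:
  "induced_path V E (girth - 2) (\<lambda>i. if i = 0 then w else cs ! (i - 1))"
  unfolding induced_path_def
proof (intro conjI ballI allI impI)
  show "(\<lambda>i. if i = 0 then w else cs ! (i - 1)) ` {..girth - 2} \<subseteq> V"
    using cycle_nth_in_V adj_in_V[OF w(1)] girth_ge_3 by auto
  show "inj_on (\<lambda>i. if i = 0 then w else cs ! (i - 1)) {..girth - 2}"
    using off_cycle_neighbour_not_on_cycle nth_mem[of _ cs] girth_ge_3
    by (auto simp: inj_on_def cycle_nth_eq_iff split: if_splits)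
  fix i j assume ij: "i \<le> girth - 2" "j \<le> girth - 2"
  show "E (if i = 0 then w else cs ! (i - 1)) (if j = 0 then w else cs ! (j - 1)) \<longleftrightarrow>
    j = Suc i \<or> i = Suc j"
  proof (cases "i = 0"; cases "j = 0")
    assume "i = 0" "j \<noteq> 0"
    then show ?thesis
      using ij adj_sym[OF w(1)] off_cycle_neighbour_not_adj_short_arc[of "j - 1"]
      by (cases "j = 1") auto
  next
    assume "i \<noteq> 0" "j = 0"
    then show ?thesis
      using ij w(1) off_cycle_neighbour_not_adj_short_arc[of "i - 1"] adj_sym[of "cs ! (i - 1)" w]
      by (cases "i = 1") auto
  next
    assume "i \<noteq> 0" "j \<noteq> 0"
    then show ?thesis using ij cycle_adj_iff[of "i - 1" "j - 1"] girth_ge_6 by auto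
  qed (simp add: adj_irrefl)
qed

text \<open>An automorphism moves the path cs!1, ..., cs!(girth - 1) onto w, cs!0, ..., cs!(girth - 3);
  the image of cs!0 is the sixth vertex.\<close>

lemma hexagon_through_off_cycle_neighbour:
  obtains u where "E w u" "E u (cs ! (girth - 3))"
    "distinct [cs ! (girth - 3), cs ! (girth - 2), cs ! (girth - 1), cs ! 0, w, u]"
proof -
  let ?q = "\<lambda>i. if i = 0 then w else cs ! (i - 1)"
  have side: "(cs ! Suc 0 \<in> X) \<longleftrightarrow> (w \<in> X)"
    using common_neighbour_same_side[OF cycle_adj[of 0] w(1)] girth_ge_3 by simp
  obtain g where g: "bip_automorphism V E X Y g"
    and g_path: "\<And>i. i \<le> girth - 2 \<Longrightarrow> g (cs ! Suc i) = ?q i"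
    by (rule induced_paths_conjugate[OF induced_path_cycle_without_first
          induced_path_via_off_cycle_neighbour]) (use side in auto)
  define u where "u = g (cs ! 0)"
  have wu: "E w u"
    using automorphism_adj[OF g cycle_adj[of 0]] g_path[of 0] girth_ge_3
    by (simp add: u_def adj_sym)
  have u_end: "E u (cs ! (girth - 3))"
  proof -
    have "Suc (girth - 2) = girth - 1" using girth_ge_6 by linarith
    then have "g (cs ! (girth - 1)) = cs ! (girth - 3)"
      using g_path[of "girth - 2"] girth_ge_6 by simp
    with automorphism_adj[OF g cycle_adj_wrap] show ?thesis by (simp add: u_def adj_sym)
  qed
  have u_new: "u \<noteq> ?q i" if "i \<le> girth - 2" for i
  proof
    assume "u = ?q i"
    then have "g (cs ! 0) = g (cs ! Suc i)" using g_path that by (simp add: u_def)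
    then have "cs ! 0 = cs ! Suc i"
      by (rule inj_onD[OF bij_betw_imp_inj_on[OF automorphism_bij[OF g]]])
        (use that girth_ge_3 cycle_nth_in_V[of 0] cycle_nth_in_V[of "Suc i"] in auto)
    then show False using cycle_nth_eq_iff[of 0 "Suc i"] that girth_ge_3 by simp
  qed
  have "\<not> E w (cs ! (girth - 1))" "\<not> E w (cs ! (girth - 2))"
    using off_cycle_neighbour_not_adj girth_ge_6 by simp_all
  then have "u \<notin> {cs ! (girth - 3), cs ! (girth - 2), cs ! (girth - 1), cs ! 0, w}"
    using wu u_new[of 0] u_new[of 1] u_new[of "girth - 2"] girth_ge_6 by auto
  moreover have "distinct [cs ! (girth - 3), cs ! (girth - 2), cs ! (girth - 1), cs ! 0, w]"
    using cycle_nth_eq_iff girth_ge_6 off_cycle_neighbour_not_on_cycle nth_mem[of _ cs] by auto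
  ultimately show ?thesis using that wu u_end by auto
qed

lemma girth_eq_6: "girth = 6"
proof -
  obtain u where u: "E w u" "E u (cs ! (girth - 3))"
    and hex: "distinct [cs ! (girth - 3), cs ! (girth - 2), cs ! (girth - 1), cs ! 0, w, u]"
    by (rule hexagon_through_off_cycle_neighbour)
  have "E (cs ! (girth - 3)) (cs ! (girth - 2))" "E (cs ! (girth - 2)) (cs ! (girth - 1))"
    using cycle_adj_iff[of "girth - 3" "girth - 2"] cycle_adj_iff[of "girth - 2" "girth - 1"]
      girth_ge_6 by auto
  moreover have "{cs ! (girth - 3), cs ! (girth - 2), cs ! (girth - 1), cs ! 0, w, u} \<subseteq> V"
    using cycle_nth_in_V adj_in_V[OF u(1)] girth_ge_6 by simp
  ultimately have "is_cycle V E [cs ! (girth - 3), cs ! (girth - 2), cs ! (girth - 1), cs ! 0, w, u]"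
    using hex u w(1) cycle_adj_wrap by (simp add: is_cycle_iff)
  then have "girth \<le> 6" using shortest by fastforce
  then show ?thesis using girth_ge_6 by simp
qed

end

lemma cycle_start_degree_le_2: "degree V E (cs ! 0) \<le> 2"
proof (rule ccontr)
  assume "\<not> ?thesis"
  then obtain w where w: "E (cs ! 0) w" "w \<noteq> cs ! 1" "w \<noteq> cs ! (girth - 1)"
    using degree_gt_2_imp_third_neighbour by (metis not_le)
  have girth: "girth = 6" by (rule girth_eq_6[OF w])
  obtain p where p: "E w p" "E p (cs ! 3)"
    and hex: "distinct [cs ! 3, cs ! 4, cs ! 5, cs ! 0, w, p]"
    using hexagon_through_off_cycle_neighbour[OF w] girth by auto
  have cycle6: "distinct [cs ! 0, cs ! 1, cs ! 2, cs ! 3, cs ! 4, cs ! 5]"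
    using cycle_nth_eq_iff girth by auto
  have edges: "E (cs ! 0) (cs ! 1)" "E (cs ! 1) (cs ! 2)" "E (cs ! 2) (cs ! 3)"
    "E (cs ! 3) (cs ! 4)" "E (cs ! 4) (cs ! 5)" "E (cs ! 5) (cs ! 0)"
    using cycle_adj_iff girth by auto
  have "p \<noteq> cs ! 2" using off_cycle_neighbour_not_adj[OF w, of 2] p(1) girth by auto
  then have "degree V E (cs ! 3) > 2"
    using degree_gt_2_if_three_neighbours[of "cs ! 3" "cs ! 2" "cs ! 4" p] edges p hex cycle6
      adj_sym by auto
  moreover have "degree V E w = degree V E (cs ! 3)"
    using degree_eq_if_same_side common_neighbour_same_side[OF adj_sym[OF p(1)] p(2)]
      adj_in_V p by blast
  ultimately obtain q where "E w q" "q \<noteq> cs ! 0" "q \<noteq> p"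
    using degree_gt_2_imp_third_neighbour by metis
  then show False
    using theta_middle_vertex_neighbours[OF cycle6 edges w(1) _ _ p] w girth by auto
qed

lemma degree_le_2:
  assumes "v \<in> V"
  shows "degree V E v \<le> 2"
proof -
  interpret rotated: shortest_cycle V E X Y "rotate1 cs"
    using is_cycle_rotate1[OF cycle] shortest by unfold_locales simp_all
  have "rotate1 cs ! 0 = cs ! 1" using girth_ge_3 by (simp add: nth_rotate1)
  moreover have "(cs ! 0 \<in> X) \<longleftrightarrow> (cs ! 1 \<notin> X)"
    using adj_side[OF cycle_adj[of 0]] girth_ge_3 by simp
  ultimately consider "(v \<in> X) \<longleftrightarrow> (cs ! 0 \<in> X)" | "(v \<in> X) \<longleftrightarrow> (rotate1 cs ! 0 \<in> X)"
    by metis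
  then show ?thesis
  proof cases
    case 1
    then show ?thesis
      using degree_eq_if_same_side[OF assms cycle_nth_in_V[of 0]] cycle_start_degree_le_2 by simp
  next
    case 2
    then show ?thesis
      using degree_eq_if_same_side[OF assms rotated.cycle_nth_in_V[of 0]]
        rotated.cycle_start_degree_le_2 by simp
  qed
qed

end

theorem lemma4p4:
  fixes V X Y :: "'a set" and E :: "'a \<Rightarrow> 'a \<Rightarrow> bool"
  assumes "conn_homogeneous_bipartite V E X Y"
    and "connected_graph V E"
    and "locally_finite V E"
    and "\<not> is_tree V E"
    and "\<exists>v \<in> V. degree V E v > 2"
  shows "embeds_induced_C4 V E"
proof (rule ccontr)
  assume "\<not> embeds_induced_C4 V E"
  then interpret C4_free_conn_hom_bipartite V E X Y
    using assms(1,3) by unfold_locales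
  obtain cs where cs: "is_cycle V E cs"
    and shortest: "\<And>ds. is_cycle V E ds \<Longrightarrow> length cs \<le> length ds"
    using assms(2,4) ex_has_least_nat[of "is_cycle V E" _ length] by (auto simp: is_tree_def)
  interpret shortest_cycle V E X Y cs
    using cs shortest by unfold_locales
  show False using degree_le_2 assms(5) by fastforce
qed

end
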